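(* Let $d>2$ be even and $n\ge2$. There is no polynomial $\varphi$ in the coefficients of $f\in\mathbb R[x]_d$ such that $\varphi(f)>0$ for every $f$ in the interior of $P_{n,d}$ and $\varphi(f)=0$ for every $f$ on the boundary of $P_{n,d}$. Consequently, $-\log\varphi(f)$ cannot be a barrier function for $P_{n,d}$ with $\varphi$ a polynomial, and $P_{n,d}$ is not representable by a linear matrix inequality: there is no symmetric matrix pencil $L(f)=\sum_{\alpha\in\mathbb N^n,|\alpha|=d}f_\alpha A_\alpha$ (with $f(x)=\sum_\alpha f_\alpha x^\alpha$ and constant real symmetric matrices $A_\alpha$) such that $P_{n,d}=\{f\in\mathbb R[x]_d: L(f)\succeq0\}$ and $L(f)\succ0$ for all $f$ in the interior of $P_{n,d}$.
   Context: $x=(x_1,\dots,x_n)$; $\mathbb R[x]_d$ is the space of real forms of degree $d$ in $x$, identified with its coefficient vectors $(f_\alpha)_{|\alpha|=d}$. $P_{n,d}=\{f\in\mathbb R[x]_d: f(u)\ge0\ \forall u\in\mathbb R^n\}$; interior and boundary are in the Euclidean topology. A barrier function is a function tending to $+\infty$ at the boundary, here of the form $-\log\varphi$ with $\varphi>0$ on the interior and $\varphi=0$ on the boundary. *)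

theory Defs
  imports Complex_Main
begin

text \<open>Multi-indices alpha in N^n with |alpha| = d, represented as functions nat => nat
  vanishing outside {0..<n}.\<close>
definition multi_idx :: "nat \<Rightarrow> nat \<Rightarrow> (nat \<Rightarrow> nat) set" where
  "multi_idx n d = {\<alpha>. (\<forall>i\<ge>n. \<alpha> i = 0) \<and> (\<Sum>i<n. \<alpha> i) = d}"

text \<open>The space R[x]_d of real forms of degree d in n variables, identified with
  coefficient vectors (f_alpha) indexed by multi_idx n d (zero elsewhere).\<close>
definition forms :: "nat \<Rightarrow> nat \<Rightarrow> ((nat \<Rightarrow> nat) \<Rightarrow> real) set" where
  "forms n d = {f. \<forall>\<alpha>. \<alpha> \<notin> multi_idx n d \<longrightarrow> f \<alpha> = 0}"

definition form_eval :: "nat \<Rightarrow> nat \<Rightarrow> ((nat \<Rightarrow> nat) \<Rightarrow> real) \<Rightarrow> (nat \<Rightarrow> real) \<Rightarrow> real" where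
  "form_eval n d f u = (\<Sum>\<alpha>\<in>multi_idx n d. f \<alpha> * (\<Prod>i<n. u i ^ \<alpha> i))"

definition Pnd :: "nat \<Rightarrow> nat \<Rightarrow> ((nat \<Rightarrow> nat) \<Rightarrow> real) set" where
  "Pnd n d = {f \<in> forms n d. \<forall>u. form_eval n d f u \<ge> 0}"

definition coeff_dist :: "nat \<Rightarrow> nat \<Rightarrow> ((nat \<Rightarrow> nat) \<Rightarrow> real) \<Rightarrow> ((nat \<Rightarrow> nat) \<Rightarrow> real) \<Rightarrow> real" where
  "coeff_dist n d f g = sqrt (\<Sum>\<alpha>\<in>multi_idx n d. (f \<alpha> - g \<alpha>)\<^sup>2)"

definition form_interior :: "nat \<Rightarrow> nat \<Rightarrow> ((nat \<Rightarrow> nat) \<Rightarrow> real) set \<Rightarrow> ((nat \<Rightarrow> nat) \<Rightarrow> real) set" where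
  "form_interior n d S = {f \<in> forms n d. \<exists>e>0. \<forall>g\<in>forms n d. coeff_dist n d f g < e \<longrightarrow> g \<in> S}"

definition form_boundary :: "nat \<Rightarrow> nat \<Rightarrow> ((nat \<Rightarrow> nat) \<Rightarrow> real) set \<Rightarrow> ((nat \<Rightarrow> nat) \<Rightarrow> real) set" where
  "form_boundary n d S = {f \<in> forms n d. \<forall>e>0.
      (\<exists>g\<in>forms n d. coeff_dist n d f g < e \<and> g \<in> S) \<and>
      (\<exists>g\<in>forms n d. coeff_dist n d f g < e \<and> g \<notin> S)}"

definition coeff_polynomial :: "nat \<Rightarrow> nat \<Rightarrow> (((nat \<Rightarrow> nat) \<Rightarrow> real) \<Rightarrow> real) \<Rightarrow> bool" where
  "coeff_polynomial n d \<phi> \<longleftrightarrow>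
     (\<exists>E :: ((nat \<Rightarrow> nat) \<Rightarrow> nat) set. \<exists>c :: ((nat \<Rightarrow> nat) \<Rightarrow> nat) \<Rightarrow> real. finite E \<and>
        (\<forall>f\<in>forms n d. \<phi> f = (\<Sum>\<beta>\<in>E. c \<beta> * (\<Prod>\<alpha>\<in>multi_idx n d. f \<alpha> ^ \<beta> \<alpha>))))"

text \<open>Linear matrix pencil L(f) = sum_alpha f_alpha A_alpha of m x m matrices
  (matrices as nat => nat => real, entries with indices < m).\<close>
definition pencil :: "nat \<Rightarrow> nat \<Rightarrow> ((nat \<Rightarrow> nat) \<Rightarrow> nat \<Rightarrow> nat \<Rightarrow> real) \<Rightarrow> ((nat \<Rightarrow> nat) \<Rightarrow> real) \<Rightarrow> nat \<Rightarrow> nat \<Rightarrow> real" where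
  "pencil n d A f i j = (\<Sum>\<alpha>\<in>multi_idx n d. f \<alpha> * A \<alpha> i j)"

definition sym_mat :: "nat \<Rightarrow> (nat \<Rightarrow> nat \<Rightarrow> real) \<Rightarrow> bool" where
  "sym_mat m M \<longleftrightarrow> (\<forall>i<m. \<forall>j<m. M i j = M j i)"

definition psd_mat :: "nat \<Rightarrow> (nat \<Rightarrow> nat \<Rightarrow> real) \<Rightarrow> bool" where
  "psd_mat m M \<longleftrightarrow> (\<forall>v :: nat \<Rightarrow> real. (\<Sum>i<m. \<Sum>j<m. v i * M i j * v j) \<ge> 0)"

definition pd_mat :: "nat \<Rightarrow> (nat \<Rightarrow> nat \<Rightarrow> real) \<Rightarrow> bool" where
  "pd_mat m M \<longleftrightarrow> (\<forall>v :: nat \<Rightarrow> real. (\<exists>i<m. v i \<noteq> 0) \<longrightarrow> (\<Sum>i<m. \<Sum>j<m. v i * M i j * v j) > 0)"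

end

theory Submission
  imports Defs
    "HOL-Computational_Algebra.Polynomial"
    "HOL-Analysis.Weierstrass_Theorems"
    "Jordan_Normal_Form.Determinant"
begin

text \<open>
  The key object is a polynomial path of forms
  \<open>F\<^sub>s = (x\<^sub>0\<^sup>2 - s x\<^sub>1\<^sup>2)\<^sup>2 \<parallel>x\<parallel>\<^sup>d\<^sup>-\<^sup>4 + (x\<^sub>2\<^sup>2 + \<dots> + x\<^sub>n\<^sub>-\<^sub>1\<^sup>2)\<^sup>d\<^sup>/\<^sup>2\<close>:
  for \<open>s > 0\<close> it is a nonnegative form with a real zero, hence on the boundary of
  \<open>P\<^sub>n\<^sub>,\<^sub>d\<close>, while \<open>F\<^sub>-\<^sub>1 \<ge> (\<parallel>x\<parallel>\<^sup>2/2)\<^sup>d\<^sup>/\<^sup>2\<close> is an interior point.  Any quantity that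
  is polynomial in the coefficients and vanishes on the boundary is a polynomial in \<open>s\<close>
  vanishing for all \<open>s > 0\<close>, so it vanishes at the interior point \<open>F\<^sub>-\<^sub>1\<close>.  Applied to a
  candidate \<open>\<phi>\<close> this refutes the first claim; applied to \<open>det L(F\<^sub>s)\<close> for a pencil \<open>L\<close> it
  refutes the second, because on the boundary \<open>L\<close> is positive semidefinite but (positive
  definiteness being an open condition) not positive definite, hence singular.
\<close>

lemma real_polynomial_function_poly: "real_polynomial_function (poly (p :: real poly))"
proof -
  have "poly p = (\<lambda>x. \<Sum>i\<le>degree p. coeff p i * x ^ i)"
    by (simp add: poly_altdef fun_eq_iff)
  then show ?thesis
    unfolding real_polynomial_function_iff_sum by blast
qed

text \<open>This is what transports information from the boundary (parameter \<open>s > 0\<close>)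
  to the interior (parameter \<open>s = -1\<close>).\<close>
lemma real_polynomial_function_vanishing_on_positives:
  fixes p :: "real \<Rightarrow> real"
  assumes p: "real_polynomial_function p" and zero: "\<And>s. s > 0 \<Longrightarrow> p s = 0"
  shows "p x = 0"
proof -
  obtain a N where p_eq: "p = (\<lambda>x. \<Sum>i\<le>N. a i * x ^ i)"
    using p real_polynomial_function_iff_sum by blast
  have "{0<..} \<subseteq> {x. (\<Sum>i\<le>N. a i * x ^ i) = 0}"
    using zero p_eq by auto
  then have "infinite {x::real. (\<Sum>i\<le>N. a i * x ^ i) = 0}"
    using infinite_Ioi finite_subset by blast
  then have "\<forall>i\<le>N. a i = 0"
    using polyfun_finite_roots by blast
  then show ?thesis
    using p_eq by simp
qed

subsection \<open>Monomials and forms\<close>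

text \<open>There are finitely many multi-indices of a given degree, so the sums over them in
  \<open>Defs\<close> are genuine finite sums.\<close>
lemma finite_multi_idx: "finite (multi_idx n d)"
proof -
  have "multi_idx n d \<subseteq> {\<alpha>. \<forall>i. (i \<in> {..<n} \<longrightarrow> \<alpha> i \<in> {..d}) \<and> (i \<notin> {..<n} \<longrightarrow> \<alpha> i = 0)}"
  proof
    fix \<alpha> assume "\<alpha> \<in> multi_idx n d"
    then have sum_\<alpha>: "(\<Sum>i<n. \<alpha> i) = d" and vanish: "\<forall>i\<ge>n. \<alpha> i = 0"
      by (auto simp: multi_idx_def)
    have "\<alpha> i \<le> d" if "i < n" for i
      using that sum_\<alpha> member_le_sum[of i "{..<n}" \<alpha>] by simp
    then show "\<alpha> \<in> {\<alpha>. \<forall>i. (i \<in> {..<n} \<longrightarrow> \<alpha> i \<in> {..d}) \<and> (i \<notin> {..<n} \<longrightarrow> \<alpha> i = 0)}"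
      using vanish by auto
  qed
  then show ?thesis
    by (rule finite_subset) (rule finite_set_of_finite_funs; simp)
qed

definition monomial_at :: "nat \<Rightarrow> (nat \<Rightarrow> real) \<Rightarrow> (nat \<Rightarrow> nat) \<Rightarrow> real" where
  "monomial_at n u \<beta> = (\<Prod>i<n. u i ^ \<beta> i)"

lemma form_eval_monomial_at: "form_eval n d f u = (\<Sum>\<alpha>\<in>multi_idx n d. f \<alpha> * monomial_at n u \<alpha>)"
  by (simp add: form_eval_def monomial_at_def)

lemma monomial_at_add: "monomial_at n u (\<lambda>i. \<beta> i + \<gamma> i) = monomial_at n u \<beta> * monomial_at n u \<gamma>"
  by (simp add: monomial_at_def power_add prod.distrib)

lemma monomial_at_zero [simp]: "monomial_at n u (\<lambda>_. 0) = 1"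
  by (simp add: monomial_at_def)

definition pure_power :: "nat \<Rightarrow> nat \<Rightarrow> nat \<Rightarrow> nat" where
  "pure_power i e = (\<lambda>j. if j = i then e else 0)"

lemma pure_power_multi_idx: "i < n \<Longrightarrow> pure_power i e \<in> multi_idx n e"
  by (auto simp: multi_idx_def pure_power_def)

lemma monomial_at_pure_power: "i < n \<Longrightarrow> monomial_at n u (pure_power i e) = u i ^ e"
proof -
  assume "i < n"
  moreover have "monomial_at n u (pure_power i e) = (\<Prod>j<n. if j = i then u i ^ e else 1)"
    unfolding monomial_at_def pure_power_def by (rule prod.cong) auto
  ultimately show ?thesis by simp
qed

lemma monomial_at_bound:
  assumes "\<alpha> \<in> multi_idx n (2 * j)"
  shows "\<bar>monomial_at n u \<alpha>\<bar> \<le> (\<Sum>i<n. u i ^ 2) ^ j"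
proof -
  let ?S = "\<Sum>i<n. u i ^ 2"
  have degree: "(\<Sum>i<n. \<alpha> i) = 2 * j"
    using assms by (simp add: multi_idx_def)
  have coord: "\<bar>u i\<bar> \<le> sqrt ?S" if "i < n" for i
    using that real_sqrt_le_mono[OF member_le_sum[of i "{..<n}" "\<lambda>i. u i ^ 2"]] by simp
  have "\<bar>monomial_at n u \<alpha>\<bar> = (\<Prod>i<n. \<bar>u i\<bar> ^ \<alpha> i)"
    by (simp add: monomial_at_def abs_prod power_abs)
  also have "\<dots> \<le> (\<Prod>i<n. sqrt ?S ^ \<alpha> i)"
    by (intro prod_mono conjI power_mono coord) auto
  also have "\<dots> = (sqrt ?S ^ 2) ^ j"
    by (simp add: power_sum[symmetric] degree power_mult)
  also have "\<dots> = ?S ^ j"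
    by (simp add: sum_nonneg)
  finally show ?thesis .
qed

lemma coeff_le_coeff_dist:
  assumes "\<alpha> \<in> multi_idx n d"
  shows "\<bar>g \<alpha> - f \<alpha>\<bar> \<le> coeff_dist n d f g"
proof -
  have "(f \<alpha> - g \<alpha>)\<^sup>2 \<le> (\<Sum>\<beta>\<in>multi_idx n d. (f \<beta> - g \<beta>)\<^sup>2)"
    using assms finite_multi_idx by (intro member_le_sum) auto
  then have "sqrt ((f \<alpha> - g \<alpha>)\<^sup>2) \<le> coeff_dist n d f g"
    unfolding coeff_dist_def by (rule real_sqrt_le_mono)
  then show ?thesis by simp
qed

definition perturb :: "((nat \<Rightarrow> nat) \<Rightarrow> real) \<Rightarrow> real \<Rightarrow> (nat \<Rightarrow> nat) \<Rightarrow> (nat \<Rightarrow> nat) \<Rightarrow> real" where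
  "perturb f e \<beta> = (\<lambda>\<alpha>. f \<alpha> - (if \<alpha> = \<beta> then e else 0))"

lemma perturb_forms: "f \<in> forms n d \<Longrightarrow> \<beta> \<in> multi_idx n d \<Longrightarrow> perturb f e \<beta> \<in> forms n d"
  by (auto simp: forms_def perturb_def)

lemma form_eval_perturb:
  assumes "\<beta> \<in> multi_idx n d"
  shows "form_eval n d (perturb f e \<beta>) u = form_eval n d f u - e * monomial_at n u \<beta>"
proof -
  have "form_eval n d (perturb f e \<beta>) u
      = (\<Sum>\<alpha>\<in>multi_idx n d. f \<alpha> * monomial_at n u \<alpha> - (if \<alpha> = \<beta> then e * monomial_at n u \<alpha> else 0))"
    unfolding form_eval_monomial_at perturb_def by (rule sum.cong) (auto simp: left_diff_distrib)
  then show ?thesis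
    using assms finite_multi_idx by (simp add: sum_subtractf form_eval_monomial_at)
qed

lemma coeff_dist_perturb:
  assumes "\<beta> \<in> multi_idx n d" and "e \<ge> 0"
  shows "coeff_dist n d f (perturb f e \<beta>) = e"
proof -
  have "(\<Sum>\<alpha>\<in>multi_idx n d. (f \<alpha> - perturb f e \<beta> \<alpha>)\<^sup>2) = (\<Sum>\<alpha>\<in>multi_idx n d. if \<alpha> = \<beta> then e\<^sup>2 else 0)"
    by (rule sum.cong) (auto simp: perturb_def)
  also have "\<dots> = e\<^sup>2"
    using assms(1) finite_multi_idx by simp
  finally show ?thesis
    unfolding coeff_dist_def using assms(2) by simp
qed

subsection \<open>Boundary and interior points of the cone of nonnegative forms\<close>

lemma boundary_not_interior:
  assumes "f \<in> form_boundary n d S"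
  shows "f \<notin> form_interior n d S"
proof
  assume "f \<in> form_interior n d S"
  then obtain e where "e > 0" and "\<forall>g\<in>forms n d. coeff_dist n d f g < e \<longrightarrow> g \<in> S"
    unfolding form_interior_def by blast
  moreover obtain g where "g \<in> forms n d" "coeff_dist n d f g < e" "g \<notin> S"
    using assms \<open>e > 0\<close> unfolding form_boundary_def by blast
  ultimately show False by blast
qed

text \<open>A nonnegative form with a real zero \<open>u\<close> lies on the boundary: subtracting \<open>e x\<^sup>\<beta>\<close>
  for any monomial positive at \<open>u\<close> makes it negative there.\<close>
lemma nonneg_form_with_zero_on_boundary:
  assumes f: "f \<in> Pnd n d" and \<beta>: "\<beta> \<in> multi_idx n d"
    and zero: "form_eval n d f u = 0" and pos: "monomial_at n u \<beta> > 0"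
  shows "f \<in> form_boundary n d (Pnd n d)"
  unfolding form_boundary_def
proof (intro CollectI conjI allI impI)
  show f_forms: "f \<in> forms n d"
    using f by (simp add: Pnd_def)
  fix e :: real assume e: "e > 0"
  show "\<exists>g\<in>forms n d. coeff_dist n d f g < e \<and> g \<in> Pnd n d"
    using f_forms f e by (intro bexI[of _ f]) (auto simp: coeff_dist_def)
  have "form_eval n d (perturb f (e / 2) \<beta>) u < 0"
    using form_eval_perturb[OF \<beta>] zero pos e by simp
  then have "perturb f (e / 2) \<beta> \<notin> Pnd n d"
    unfolding Pnd_def by (auto simp: not_le)
  then show "\<exists>g\<in>forms n d. coeff_dist n d f g < e \<and> g \<notin> Pnd n d"
    using perturb_forms[OF f_forms \<beta>] coeff_dist_perturb[OF \<beta>, of "e / 2" f] e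
    by (intro bexI[of _ "perturb f (e / 2) \<beta>"]) auto
qed

text \<open>A form of degree \<open>d = 2j\<close> bounded below by \<open>c \<parallel>u\<parallel>\<^sup>2\<^sup>j\<close> with \<open>c > 0\<close> is an interior
  point: a perturbation of size \<open>\<delta>\<close> changes its values by at most
  \<open>|multi_idx| \<delta> \<parallel>u\<parallel>\<^sup>2\<^sup>j\<close>.\<close>
lemma coercive_form_interior:
  assumes f: "f \<in> forms n d" and d: "d = 2 * j" and c: "c > 0"
    and lower: "\<And>u. form_eval n d f u \<ge> c * (\<Sum>i<n. u i ^ 2) ^ j"
  shows "f \<in> form_interior n d (Pnd n d)"
proof -
  define N where "N = card (multi_idx n d)"
  define e where "e = c / (N + 1)"
  have e: "e > 0" and Ne: "N * e \<le> c"
    using c by (auto simp: e_def field_simps)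
  have "form_eval n d g u \<ge> 0" if dist: "coeff_dist n d f g < e" for g u
  proof -
    let ?S = "(\<Sum>i<n. u i ^ 2) ^ j"
    let ?\<delta> = "\<Sum>\<alpha>\<in>multi_idx n d. (g \<alpha> - f \<alpha>) * monomial_at n u \<alpha>"
    have S: "?S \<ge> 0" by (simp add: sum_nonneg)
    have split: "form_eval n d g u = form_eval n d f u + ?\<delta>"
      unfolding form_eval_monomial_at by (simp add: sum.distrib[symmetric] algebra_simps)
    have "\<bar>?\<delta>\<bar> \<le> (\<Sum>\<alpha>\<in>multi_idx n d. \<bar>g \<alpha> - f \<alpha>\<bar> * \<bar>monomial_at n u \<alpha>\<bar>)"
      unfolding abs_mult[symmetric] by (rule sum_abs)
    also have "\<dots> \<le> (\<Sum>\<alpha>\<in>multi_idx n d. e * ?S)"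
    proof (rule sum_mono)
      fix \<alpha> assume \<alpha>: "\<alpha> \<in> multi_idx n d"
      have "\<bar>g \<alpha> - f \<alpha>\<bar> \<le> e"
        using coeff_le_coeff_dist[OF \<alpha>, of g f] dist by linarith
      moreover have "\<bar>monomial_at n u \<alpha>\<bar> \<le> ?S"
        using \<alpha> d monomial_at_bound by blast
      ultimately show "\<bar>g \<alpha> - f \<alpha>\<bar> * \<bar>monomial_at n u \<alpha>\<bar> \<le> e * ?S"
        using e by (intro mult_mono) auto
    qed
    also have "\<dots> = N * e * ?S"
      by (simp add: N_def)
    also have "\<dots> \<le> c * ?S"
      using Ne S by (rule mult_right_mono)
    finally show ?thesis
      using split lower[of u] by linarith
  qed
  then show ?thesis
    unfolding form_interior_def Pnd_def using f e by blast
qed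

subsection \<open>Forms depending polynomially on a parameter\<close>

text \<open>A parametric form is a formal sum \<open>\<Sum>\<^sub>j c\<^sub>j(s) x^\<beta>\<^sub>j\<close> of monomials whose coefficients are
  univariate polynomials in a real parameter \<open>s\<close>; repeated exponents are allowed.\<close>
type_synonym pform = "(real poly \<times> (nat \<Rightarrow> nat)) list"

definition pform_eval :: "nat \<Rightarrow> pform \<Rightarrow> real \<Rightarrow> (nat \<Rightarrow> real) \<Rightarrow> real" where
  "pform_eval n T s u = (\<Sum>t\<leftarrow>T. poly (fst t) s * monomial_at n u (snd t))"

definition pform_coeff :: "pform \<Rightarrow> real \<Rightarrow> (nat \<Rightarrow> nat) \<Rightarrow> real" where
  "pform_coeff T s \<alpha> = (\<Sum>t\<leftarrow>T. if snd t = \<alpha> then poly (fst t) s else 0)"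

definition pform_mult :: "pform \<Rightarrow> pform \<Rightarrow> pform" where
  "pform_mult T1 T2 = concat (map (\<lambda>t1. map (\<lambda>t2. (fst t1 * fst t2, \<lambda>i. snd t1 i + snd t2 i)) T2) T1)"

fun pform_pow :: "pform \<Rightarrow> nat \<Rightarrow> pform" where
  "pform_pow T 0 = [(1, \<lambda>_. 0)]"
| "pform_pow T (Suc k) = pform_mult T (pform_pow T k)"

definition homogeneous :: "nat \<Rightarrow> nat \<Rightarrow> pform \<Rightarrow> bool" where
  "homogeneous n d T \<longleftrightarrow> (\<forall>t\<in>set T. snd t \<in> multi_idx n d)"

lemma pform_eval_append [simp]: "pform_eval n (T1 @ T2) s u = pform_eval n T1 s u + pform_eval n T2 s u"
  by (simp add: pform_eval_def)

lemma pform_eval_mult [simp]: "pform_eval n (pform_mult T1 T2) s u = pform_eval n T1 s u * pform_eval n T2 s u"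
proof (induction T1)
  case Nil
  then show ?case by (simp add: pform_mult_def pform_eval_def)
next
  case (Cons t T1)
  have "pform_eval n (map (\<lambda>t2. (fst t * fst t2, \<lambda>i. snd t i + snd t2 i)) T2) s u
      = poly (fst t) s * monomial_at n u (snd t) * pform_eval n T2 s u"
    by (induction T2) (auto simp: pform_eval_def monomial_at_add algebra_simps)
  then show ?case
    using Cons by (simp add: pform_mult_def) (simp add: pform_eval_def algebra_simps)
qed

lemma pform_eval_pow [simp]: "pform_eval n (pform_pow T k) s u = pform_eval n T s u ^ k"
  by (induction k) (simp_all add: pform_eval_def[of n "[_]"])

lemma homogeneous_append: "homogeneous n d T1 \<Longrightarrow> homogeneous n d T2 \<Longrightarrow> homogeneous n d (T1 @ T2)"
  by (auto simp: homogeneous_def)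

lemma homogeneous_mult:
  "homogeneous n d1 T1 \<Longrightarrow> homogeneous n d2 T2 \<Longrightarrow> homogeneous n (d1 + d2) (pform_mult T1 T2)"
  by (auto simp: homogeneous_def pform_mult_def multi_idx_def sum.distrib)

lemma homogeneous_pow: "homogeneous n d T \<Longrightarrow> homogeneous n (d * k) (pform_pow T k)"
proof (induction k)
  case 0
  then show ?case by (simp add: homogeneous_def multi_idx_def)
next
  case (Suc k)
  then have "homogeneous n (d + d * k) (pform_mult T (pform_pow T k))"
    by (intro homogeneous_mult)
  then show ?case by simp
qed

lemma pform_coeff_Cons:
  "pform_coeff (t # T) s \<alpha> = (if snd t = \<alpha> then poly (fst t) s else 0) + pform_coeff T s \<alpha>"
  by (simp add: pform_coeff_def)

lemma pform_coeff_forms: "homogeneous n d T \<Longrightarrow> pform_coeff T s \<in> forms n d"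
  by (induction T) (auto simp: forms_def homogeneous_def pform_coeff_def)

lemma form_eval_pform_coeff:
  "homogeneous n d T \<Longrightarrow> form_eval n d (pform_coeff T s) u = pform_eval n T s u"
proof (induction T)
  case Nil
  then show ?case by (simp add: form_eval_def pform_coeff_def pform_eval_def)
next
  case (Cons t T)
  then have T: "homogeneous n d T" and t: "snd t \<in> multi_idx n d"
    by (auto simp: homogeneous_def)
  have "form_eval n d (pform_coeff (t # T) s) u
      = (\<Sum>\<alpha>\<in>multi_idx n d. if snd t = \<alpha> then poly (fst t) s * monomial_at n u \<alpha> else 0)
        + form_eval n d (pform_coeff T s) u"
    unfolding form_eval_monomial_at pform_coeff_Cons sum.distrib[symmetric]
    by (rule sum.cong) (auto simp: distrib_right)
  also have "\<dots> = poly (fst t) s * monomial_at n u (snd t) + pform_eval n T s u"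
    using t Cons.IH[OF T] finite_multi_idx by simp
  finally show ?case
    by (simp add: pform_eval_def)
qed

lemma pform_coeff_polynomial: "real_polynomial_function (\<lambda>s. pform_coeff T s \<alpha>)"
proof (induction T)
  case Nil
  then show ?case by (simp add: pform_coeff_def real_polynomial_function.intros(2))
next
  case (Cons t T)
  then show ?case
    by (cases "snd t = \<alpha>") (auto simp: pform_coeff_Cons real_polynomial_function_poly)
qed

subsection \<open>A polynomial path of forms from the boundary into the interior\<close>

definition sum_of_squares :: "nat list \<Rightarrow> pform" where
  "sum_of_squares I = map (\<lambda>i. (1, pure_power i 2)) I"

lemma homogeneous_sum_of_squares: "set I \<subseteq> {..<n} \<Longrightarrow> homogeneous n 2 (sum_of_squares I)"
  by (auto simp: homogeneous_def sum_of_squares_def intro!: pure_power_multi_idx)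

lemma pform_eval_sum_of_squares:
  assumes "distinct I" and "set I \<subseteq> {..<n}"
  shows "pform_eval n (sum_of_squares I) s u = (\<Sum>i\<in>set I. u i ^ 2)"
proof -
  have "pform_eval n (sum_of_squares I) s u = (\<Sum>i\<leftarrow>I. monomial_at n u (pure_power i 2))"
    by (simp add: pform_eval_def sum_of_squares_def o_def)
  also have "\<dots> = (\<Sum>i\<in>set I. monomial_at n u (pure_power i 2))"
    using assms(1) by (simp add: sum_list_distinct_conv_sum_set)
  also have "\<dots> = (\<Sum>i\<in>set I. u i ^ 2)"
    using assms(2) by (intro sum.cong) (auto simp: monomial_at_pure_power)
  finally show ?thesis .
qed

text \<open>For a degree \<open>d = 2h\<close> with \<open>h \<ge> 2\<close>, the parametric form
  \<open>(x\<^sub>0\<^sup>2 - s x\<^sub>1\<^sup>2)\<^sup>2 (x\<^sub>0\<^sup>2 + \<dots> + x\<^sub>n\<^sub>-\<^sub>1\<^sup>2)\<^sup>h\<^sup>-\<^sup>2 + (x\<^sub>2\<^sup>2 + \<dots> + x\<^sub>n\<^sub>-\<^sub>1\<^sup>2)\<^sup>h\<close>.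
  It is nonnegative for all \<open>s\<close>, has the real zero \<open>(\<surd>s, 1, 0, \<dots>, 0)\<close> for \<open>s > 0\<close>,
  and is positive definite for \<open>s = -1\<close>.\<close>
definition test_pform :: "nat \<Rightarrow> nat \<Rightarrow> pform" where
  "test_pform n d =
     pform_mult (pform_pow [(1, pure_power 0 2), (- [:0, 1:], pure_power 1 2)] 2)
                (pform_pow (sum_of_squares [0..<n]) (d div 2 - 2))
     @ pform_pow (sum_of_squares [2..<n]) (d div 2)"

definition test_form :: "nat \<Rightarrow> nat \<Rightarrow> real \<Rightarrow> (nat \<Rightarrow> nat) \<Rightarrow> real" where
  "test_form n d s = pform_coeff (test_pform n d) s"

lemma homogeneous_test_pform:
  assumes n: "n \<ge> 2" and d: "even d" "d > 2"
  shows "homogeneous n d (test_pform n d)"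
proof -
  have "homogeneous n 2 [(1, pure_power 0 2), (- [:0, 1:], pure_power 1 2)]"
    using n by (auto simp: homogeneous_def intro!: pure_power_multi_idx)
  then have "homogeneous n (2 * 2 + 2 * (d div 2 - 2))
      (pform_mult (pform_pow [(1, pure_power 0 2), (- [:0, 1:], pure_power 1 2)] 2)
                  (pform_pow (sum_of_squares [0..<n]) (d div 2 - 2)))"
    by (intro homogeneous_mult homogeneous_pow homogeneous_sum_of_squares) auto
  moreover have "homogeneous n (2 * (d div 2)) (pform_pow (sum_of_squares [2..<n]) (d div 2))"
    by (intro homogeneous_pow homogeneous_sum_of_squares) auto
  moreover have "2 * 2 + 2 * (d div 2 - 2) = d" and "2 * (d div 2) = d"
    using d by (auto elim!: evenE)
  ultimately show ?thesis
    unfolding test_pform_def by (intro homogeneous_append) simp_all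
qed

lemma test_form_forms: "n \<ge> 2 \<Longrightarrow> even d \<Longrightarrow> d > 2 \<Longrightarrow> test_form n d s \<in> forms n d"
  unfolding test_form_def by (rule pform_coeff_forms[OF homogeneous_test_pform])

lemma test_form_polynomial: "real_polynomial_function (\<lambda>s. test_form n d s \<alpha>)"
  unfolding test_form_def by (rule pform_coeff_polynomial)

lemma form_eval_test_form:
  assumes n: "n \<ge> 2" and d: "even d" "d > 2"
  shows "form_eval n d (test_form n d s) u
    = (u 0 ^ 2 - s * u 1 ^ 2) ^ 2 * (\<Sum>i<n. u i ^ 2) ^ (d div 2 - 2) + (\<Sum>i\<in>{2..<n}. u i ^ 2) ^ (d div 2)"
proof -
  have "pform_eval n [(1, pure_power 0 2), (- [:0, 1:], pure_power 1 2)] s u = u 0 ^ 2 - s * u 1 ^ 2"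
    using n by (simp add: pform_eval_def monomial_at_pure_power)
  moreover have "pform_eval n (sum_of_squares [0..<n]) s u = (\<Sum>i<n. u i ^ 2)"
    by (simp add: pform_eval_sum_of_squares atLeast0LessThan)
  moreover have "pform_eval n (sum_of_squares [2..<n]) s u = (\<Sum>i\<in>{2..<n}. u i ^ 2)"
    by (subst pform_eval_sum_of_squares) auto
  ultimately show ?thesis
    unfolding test_form_def form_eval_pform_coeff[OF homogeneous_test_pform[OF n d]]
    by (simp add: test_pform_def)
qed

lemma test_form_nonneg: "n \<ge> 2 \<Longrightarrow> even d \<Longrightarrow> d > 2 \<Longrightarrow> test_form n d s \<in> Pnd n d"
  by (auto simp: Pnd_def form_eval_test_form test_form_forms sum_nonneg)

text \<open>For \<open>s > 0\<close> the test form vanishes at \<open>(\<surd>s, 1, 0, \<dots>, 0)\<close>, where \<open>x\<^sub>1\<^sup>d = 1\<close>.\<close>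
lemma test_form_boundary:
  assumes n: "n \<ge> 2" and d: "even d" "d > 2" and s: "s > 0"
  shows "test_form n d s \<in> form_boundary n d (Pnd n d)"
proof -
  define u :: "nat \<Rightarrow> real" where "u = (\<lambda>i. if i = 0 then sqrt s else if i = 1 then 1 else 0)"
  have "form_eval n d (test_form n d s) u = 0"
    using s d by (simp add: form_eval_test_form[OF n d] u_def)
  moreover have "monomial_at n u (pure_power 1 d) > 0"
    using n by (simp add: monomial_at_pure_power u_def)
  ultimately show ?thesis
    using n d pure_power_multi_idx[of 1 n d]
    by (intro nonneg_form_with_zero_on_boundary test_form_nonneg) auto
qed

text \<open>An elementary estimate: \<open>a\<^sup>2 (a + b)\<^sup>h\<^sup>-\<^sup>2 + b\<^sup>h \<ge> ((a + b) / 2)\<^sup>h\<close> for \<open>a, b \<ge> 0\<close>,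
  since the larger of \<open>a\<close> and \<open>b\<close> is at least \<open>(a + b) / 2\<close>.\<close>
lemma mixed_power_lower_bound:
  fixes a b :: real
  assumes a: "a \<ge> 0" and b: "b \<ge> 0" and h: "h \<ge> 2"
  shows "((a + b) / 2) ^ h \<le> a\<^sup>2 * (a + b) ^ (h - 2) + b ^ h"
proof (cases "b \<le> a")
  case True
  have "h = 2 + (h - 2)"
    using h by simp
  then have "((a + b) / 2) ^ h = ((a + b) / 2)\<^sup>2 * ((a + b) / 2) ^ (h - 2)"
    by (metis power_add)
  also have "\<dots> \<le> a\<^sup>2 * (a + b) ^ (h - 2)"
    using True a b by (intro mult_mono power_mono) auto
  finally show ?thesis
    using b by (simp add: add_increasing2)
next
  case False
  then have "((a + b) / 2) ^ h \<le> b ^ h"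
    using a b by (intro power_mono) auto
  then show ?thesis
    using a b by (simp add: add_increasing)
qed

text \<open>For \<open>s = -1\<close> the test form is bounded below by \<open>(\<parallel>u\<parallel>\<^sup>2 / 2)\<^sup>d\<^sup>/\<^sup>2\<close>.\<close>
lemma test_form_interior:
  assumes n: "n \<ge> 2" and d: "even d" "d > 2"
  shows "test_form n d (-1) \<in> form_interior n d (Pnd n d)"
proof (rule coercive_form_interior[OF test_form_forms[OF n d]])
  show "d = 2 * (d div 2)"
    using d by simp
  show "(0::real) < 1 / 2 ^ (d div 2)" by simp
  fix u :: "nat \<Rightarrow> real"
  let ?A = "u 0 ^ 2 + u 1 ^ 2" and ?B = "\<Sum>i\<in>{2..<n}. u i ^ 2"
  have "{..<n} = {0, 1} \<union> {2..<n}"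
    using n by auto
  then have split: "(\<Sum>i<n. u i ^ 2) = ?A + ?B"
    by simp
  have "1 / 2 ^ (d div 2) * (\<Sum>i<n. u i ^ 2) ^ (d div 2) = ((?A + ?B) / 2) ^ (d div 2)"
    by (simp add: split power_divide)
  also have "\<dots> \<le> ?A\<^sup>2 * (?A + ?B) ^ (d div 2 - 2) + ?B ^ (d div 2)"
    using d by (intro mixed_power_lower_bound) (auto simp: sum_nonneg elim!: evenE)
  also have "\<dots> = form_eval n d (test_form n d (-1)) u"
    by (simp add: form_eval_test_form[OF n d] split)
  finally show "1 / 2 ^ (d div 2) * (\<Sum>i<n. u i ^ 2) ^ (d div 2) \<le> form_eval n d (test_form n d (-1)) u" .
qed

subsection \<open>Quadratic forms of symmetric matrices\<close>

text \<open>Matrices are functions \<open>nat \<Rightarrow> nat \<Rightarrow> real\<close> of which only the entries below \<open>m\<close> matter.\<close>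
abbreviation quad_form :: "nat \<Rightarrow> (nat \<Rightarrow> nat \<Rightarrow> real) \<Rightarrow> (nat \<Rightarrow> real) \<Rightarrow> real" where
  "quad_form m M v \<equiv> \<Sum>i<m. \<Sum>j<m. v i * M i j * v j"

abbreviation sq_norm :: "nat \<Rightarrow> (nat \<Rightarrow> real) \<Rightarrow> real" where
  "sq_norm m v \<equiv> \<Sum>i<m. v i ^ 2"

lemma quad_form_bound: "\<bar>quad_form m H v\<bar> \<le> (\<Sum>i<m. \<Sum>j<m. \<bar>H i j\<bar>) * sq_norm m v"
proof -
  have entry: "\<bar>v i * H i j * v j\<bar> \<le> \<bar>H i j\<bar> * sq_norm m v" if "i < m" "j < m" for i j
  proof -
    have "v i ^ 2 \<le> sq_norm m v" "v j ^ 2 \<le> sq_norm m v"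
      using that by (auto intro!: member_le_sum)
    moreover have "2 * \<bar>v i * v j\<bar> \<le> v i ^ 2 + v j ^ 2"
      using sum_squares_bound[of "\<bar>v i\<bar>" "\<bar>v j\<bar>"] by (simp add: abs_mult)
    ultimately have "\<bar>v i * v j\<bar> \<le> sq_norm m v"
      by linarith
    then have "\<bar>H i j\<bar> * \<bar>v i * v j\<bar> \<le> \<bar>H i j\<bar> * sq_norm m v"
      by (rule mult_left_mono) simp
    moreover have "\<bar>v i * H i j * v j\<bar> = \<bar>H i j\<bar> * \<bar>v i * v j\<bar>"
      by (simp add: abs_mult)
    ultimately show ?thesis
      by simp
  qed
  have "\<bar>quad_form m H v\<bar> \<le> (\<Sum>i<m. \<Sum>j<m. \<bar>v i * H i j * v j\<bar>)"
    by (rule order.trans[OF sum_abs sum_mono[OF sum_abs]])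
  also have "\<dots> \<le> (\<Sum>i<m. \<Sum>j<m. \<bar>H i j\<bar> * sq_norm m v)"
    using entry by (intro sum_mono) auto
  finally show ?thesis
    by (simp add: sum_distrib_right)
qed

lemma quad_form_unit:
  assumes k: "k < m"
  shows "quad_form m M (\<lambda>i. if i = k then 1 else 0) = M k k"
proof -
  have "(\<Sum>j<m. x * M i j * (if j = k then 1 else 0)) = x * M i k" for x i
    using k by (simp add: sum.remove[of "{..<m}" k])
  then have "quad_form m M (\<lambda>i. if i = k then 1 else 0) = (\<Sum>i<m. (if i = k then 1 else 0) * M i k)"
    by presburger
  also have "\<dots> = M k k"
    using k by (simp add: sum.remove[of "{..<m}" k])
  finally show ?thesis .
qed

text \<open>Completing the square in the last variable (Schur complement): for a symmetric
  \<open>(m+1) \<times> (m+1)\<close> matrix with \<open>a = M m m \<noteq> 0\<close>,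
  \<open>v\<^sup>T M v = v'\<^sup>T M' v' + a (v\<^sub>m + L v / a)\<^sup>2\<close> with \<open>M' = M - b b\<^sup>T / a\<close> on the first \<open>m\<close>
  coordinates, where \<open>b = M\<^sub>\<bullet>\<^sub>m\<close> and \<open>L v = b\<^sup>T v'\<close>.\<close>
lemma quad_form_schur:
  assumes sym: "sym_mat (Suc m) M" and a: "M m m \<noteq> 0"
  shows "quad_form (Suc m) M v
    = quad_form m (\<lambda>i j. M i j - M i m * M j m / M m m) v
      + M m m * (v m + (\<Sum>i<m. M i m * v i) / M m m)\<^sup>2"
proof -
  let ?L = "\<Sum>i<m. M i m * v i"
  have row: "(\<Sum>j<m. v m * M m j * v j) = v m * ?L"
    using sym by (auto simp: sym_mat_def sum_distrib_left intro!: sum.cong)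
  have "quad_form (Suc m) M v = quad_form m M v + 2 * v m * ?L + M m m * v m ^ 2"
    using row by (simp add: sum.distrib sum_distrib_left power2_eq_square algebra_simps)
  moreover have "quad_form m (\<lambda>i j. M i j - M i m * M j m / M m m) v = quad_form m M v - ?L\<^sup>2 / M m m"
    by (simp add: algebra_simps sum_subtractf sum_divide_distrib power2_eq_square sum_product)
  moreover have "M m m * (v m + ?L / M m m)\<^sup>2 = M m m * v m ^ 2 + 2 * v m * ?L + ?L\<^sup>2 / M m m"
    using a by (simp add: field_simps power2_eq_square)
  ultimately show ?thesis
    by simp
qed

text \<open>The elementary inequality behind the induction step of \<open>pd_coercive\<close>: a coercive
  quadratic form plus a positive square in a new variable is again coercive.\<close>
lemma coercive_extension:
  fixes a c' B :: real
  assumes a: "a > 0" and c': "c' > 0" and B: "B \<ge> 0"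
  shows "\<exists>c>0. \<forall>V x l. V \<ge> 0 \<longrightarrow> l\<^sup>2 \<le> B * V \<longrightarrow> c * (V + x\<^sup>2) \<le> c' * V + a * (x + l / a)\<^sup>2"
proof -
  define K where "K = 1 + 2 * B / a\<^sup>2"
  have K: "K \<ge> 1"
    using B a by (simp add: K_def)
  define c where "c = min (c' / K) (a / 2)"
  have c: "c > 0" "2 * c \<le> a"
    using c' a K by (simp_all add: c_def)
  have "c \<le> c' / K"
    by (simp add: c_def)
  then have cK: "c * K \<le> c'"
    using K by (simp add: le_divide_eq)
  have "c * (V + x\<^sup>2) \<le> c' * V + a * (x + l / a)\<^sup>2" if V: "V \<ge> 0" and l: "l\<^sup>2 \<le> B * V" for V x l
  proof -
    define y where "y = l / a"
    define w where "w = x + y"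
    have x: "x\<^sup>2 \<le> 2 * w\<^sup>2 + 2 * (l / a)\<^sup>2"
      using sum_squares_bound[of w "- y"] by (simp add: w_def y_def[symmetric] power2_eq_square algebra_simps)
    have "(l / a)\<^sup>2 \<le> B * V / a\<^sup>2"
      using l a by (simp add: power_divide divide_right_mono)
    moreover have "2 * (B * V / a\<^sup>2) = (K - 1) * V"
      by (simp add: K_def)
    ultimately have "x\<^sup>2 \<le> 2 * w\<^sup>2 + (K - 1) * V"
      using x by linarith
    then have "c * (V + x\<^sup>2) \<le> c * (V + (2 * w\<^sup>2 + (K - 1) * V))"
      using c by (intro mult_left_mono) auto
    also have "\<dots> = (c * K) * V + (2 * c) * w\<^sup>2"
      by (simp add: algebra_simps)
    also have "\<dots> \<le> c' * V + a * w\<^sup>2"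
      using c cK V by (intro add_mono mult_right_mono) auto
    finally show ?thesis
      by (simp add: w_def y_def)
  qed
  then show ?thesis
    using c by blast
qed

lemma pd_schur_complement:
  assumes sym: "sym_mat (Suc m) M" and pd: "pd_mat (Suc m) M"
  shows "M m m > 0"
    and "sym_mat m (\<lambda>i j. M i j - M i m * M j m / M m m)"
    and "pd_mat m (\<lambda>i j. M i j - M i m * M j m / M m m)"
proof -
  let ?M' = "\<lambda>i j. M i j - M i m * M j m / M m m"
  let ?L = "\<lambda>v. \<Sum>i<m. M i m * v i"
  have "\<exists>i<Suc m. (\<lambda>i. if i = m then 1 else 0 :: real) i \<noteq> 0"
    by auto
  then have "quad_form (Suc m) M (\<lambda>i. if i = m then 1 else 0) > 0"
    by (rule pd[unfolded pd_mat_def, rule_format])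
  then show a: "M m m > 0"
    unfolding quad_form_unit[OF lessI] .
  show "sym_mat m ?M'"
    using sym by (auto simp: sym_mat_def mult.commute)
  show "pd_mat m ?M'"
    unfolding pd_mat_def
  proof (intro allI impI)
    fix v :: "nat \<Rightarrow> real" assume "\<exists>i<m. v i \<noteq> 0"
    define v' where "v' = v(m := - ?L v / M m m)"
    have "\<exists>i<Suc m. v' i \<noteq> 0"
      using \<open>\<exists>i<m. v i \<noteq> 0\<close> by (auto simp: v'_def)
    then have "quad_form (Suc m) M v' > 0"
      by (rule pd[unfolded pd_mat_def, rule_format])
    moreover have "?L v' = ?L v" "quad_form m ?M' v' = quad_form m ?M' v" "v' m = - ?L v / M m m"
      unfolding v'_def by (auto intro!: sum.cong)
    ultimately show "quad_form m ?M' v > 0"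
      using quad_form_schur[OF sym, of v'] a by simp
  qed
qed

lemma square_linear_form_bound:
  "(\<Sum>i<m. b i * v i)\<^sup>2 \<le> (\<Sum>i<m. \<Sum>j<m. \<bar>b i * b j\<bar>) * sq_norm m v"
proof -
  have "(\<Sum>i<m. b i * v i)\<^sup>2 = quad_form m (\<lambda>i j. b i * b j) v"
    by (simp add: power2_eq_square sum_product algebra_simps)
  then show ?thesis
    using quad_form_bound[where m = m and H = "\<lambda>i j. b i * b j" and v = v] by simp
qed

text \<open>Induction on the size, eliminating the last variable by \<open>quad_form_schur\<close>.\<close>
lemma pd_coercive:
  "sym_mat m M \<Longrightarrow> pd_mat m M \<Longrightarrow> \<exists>c>0. \<forall>v. quad_form m M v \<ge> c * sq_norm m v"
proof (induction m arbitrary: M)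
  case 0
  then show ?case by (intro exI[of _ 1]) simp
next
  case (Suc m)
  define a where "a = M m m"
  define M' where "M' = (\<lambda>i j. M i j - M i m * M j m / a)"
  define L where "L v = (\<Sum>i<m. M i m * v i)" for v
  note schur_complement = pd_schur_complement[OF Suc.prems, folded a_def, folded M'_def]
  have a: "a > 0"
    by (fact schur_complement(1))
  have schur: "quad_form (Suc m) M v = quad_form m M' v + a * (v m + L v / a)\<^sup>2" for v
    using quad_form_schur[OF Suc.prems(1), of v] a by (simp add: a_def M'_def L_def)
  obtain c' where c': "c' > 0" "\<And>v. quad_form m M' v \<ge> c' * sq_norm m v"
    using Suc.IH[OF schur_complement(2,3)] by blast
  define B where "B = (\<Sum>i<m. \<Sum>j<m. \<bar>M i m * M j m\<bar>)"
  have "B \<ge> 0"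
    unfolding B_def by (intro sum_nonneg) auto
  then obtain c where c: "c > 0"
    and ext: "\<And>V x l. V \<ge> 0 \<Longrightarrow> l\<^sup>2 \<le> B * V \<Longrightarrow> c * (V + x\<^sup>2) \<le> c' * V + a * (x + l / a)\<^sup>2"
    using coercive_extension[OF a c'(1)] by blast
  have "c * sq_norm (Suc m) v \<le> quad_form (Suc m) M v" for v
  proof -
    have "c * (sq_norm m v + (v m)\<^sup>2) \<le> c' * sq_norm m v + a * (v m + L v / a)\<^sup>2"
      by (rule ext) (simp_all add: sum_nonneg L_def B_def square_linear_form_bound)
    also have "\<dots> \<le> quad_form (Suc m) M v"
      using c'(2)[of v] schur[of v] by simp
    finally show ?thesis
      by simp
  qed
  then show ?case
    using c by blast
qed

lemma quad_form_shift:
  "quad_form m M (\<lambda>j. v j + t * x j)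
    = quad_form m M v + t * ((\<Sum>i<m. \<Sum>j<m. x i * M i j * v j) + (\<Sum>i<m. \<Sum>j<m. v i * M i j * x j))
      + t\<^sup>2 * quad_form m M x"
  by (simp add: algebra_simps sum.distrib sum_distrib_left power2_eq_square)

text \<open>Vectors isotropic for a positive semidefinite matrix lie in its kernel: otherwise moving
  along a coordinate direction would make the quadratic form negative.\<close>
lemma psd_isotropic_kernel:
  assumes sym: "sym_mat m M" and psd: "psd_mat m M" and iso: "quad_form m M v = 0" and i: "i < m"
  shows "(\<Sum>j<m. M i j * v j) = 0"
proof -
  define r where "r = (\<Sum>j<m. M i j * v j)"
  define x where "x = (\<lambda>j. if j = i then 1 else (0::real))"
  define p where "p = M i i"
  have mixed1: "(\<Sum>k<m. \<Sum>j<m. x k * M k j * v j) = r"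
    unfolding x_def r_def using i by (simp add: sum.remove[of "{..<m}" i])
  have "(\<Sum>k<m. \<Sum>j<m. v k * M k j * x j) = (\<Sum>k<m. v k * M k i)"
    unfolding x_def using i by (intro sum.cong refl) (simp add: sum.remove[of "{..<m}" i])
  also have "\<dots> = r"
    unfolding r_def using sym i by (intro sum.cong refl) (auto simp: sym_mat_def)
  finally have mixed2: "(\<Sum>k<m. \<Sum>j<m. v k * M k j * x j) = r" .
  have qx: "quad_form m M x = p"
    unfolding x_def p_def by (rule quad_form_unit[OF i])
  have "0 \<le> quad_form m M x"
    by (rule psd[unfolded psd_mat_def, rule_format])
  then have p: "p \<ge> 0"
    unfolding qx .
  define t where "t = - r / (p + 1)"
  have "0 \<le> quad_form m M (\<lambda>j. v j + t * x j)"
    by (rule psd[unfolded psd_mat_def, rule_format])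
  also have "\<dots> = 2 * t * r + t\<^sup>2 * p"
    unfolding quad_form_shift iso mixed1 mixed2 qx by simp
  finally have nonneg: "0 \<le> 2 * t * r + t\<^sup>2 * p" .
  have tp: "t * (p + 1) = - r"
    unfolding t_def using p by simp
  have "(p + 1)\<^sup>2 * (2 * t * r + t\<^sup>2 * p) = 2 * r * (p + 1) * (t * (p + 1)) + p * (t * (p + 1))\<^sup>2"
    by (simp add: algebra_simps power2_eq_square)
  also have "\<dots> = - (r\<^sup>2 * (p + 2))"
    unfolding tp by (simp add: algebra_simps power2_eq_square)
  finally have "(p + 1)\<^sup>2 * (2 * t * r + t\<^sup>2 * p) = - (r\<^sup>2 * (p + 2))" .
  moreover have "0 \<le> (p + 1)\<^sup>2 * (2 * t * r + t\<^sup>2 * p)"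
    using nonneg by simp
  ultimately have "r\<^sup>2 * (p + 2) \<le> 0"
    by linarith
  then have "r\<^sup>2 \<le> 0"
    using p by (simp add: mult_le_0_iff)
  then show ?thesis
    unfolding r_def by simp
qed

subsection \<open>Determinants\<close>

definition to_mat :: "nat \<Rightarrow> (nat \<Rightarrow> nat \<Rightarrow> real) \<Rightarrow> real mat" where
  "to_mat m M = mat m m (\<lambda>(i, j). M i j)"

lemma to_mat_carrier: "to_mat m M \<in> carrier_mat m m"
  by (simp add: to_mat_def)

lemma det_zero_iff_kernel:
  "det (to_mat m M) = 0 \<longleftrightarrow> (\<exists>v. (\<exists>i<m. v i \<noteq> 0) \<and> (\<forall>i<m. (\<Sum>j<m. M i j * v j) = 0))"
proof -
  have mult: "(to_mat m M *\<^sub>v vec m v) $ i = (\<Sum>j<m. M i j * v j)" if "i < m" for v i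
    using that by (simp add: to_mat_def scalar_prod_def lessThan_atLeast0)
  have "(\<exists>w. w \<in> carrier_vec m \<and> w \<noteq> 0\<^sub>v m \<and> to_mat m M *\<^sub>v w = 0\<^sub>v m)
      \<longleftrightarrow> (\<exists>v. (\<exists>i<m. v i \<noteq> 0) \<and> (\<forall>i<m. (\<Sum>j<m. M i j * v j) = 0))"
  proof
    assume "\<exists>w. w \<in> carrier_vec m \<and> w \<noteq> 0\<^sub>v m \<and> to_mat m M *\<^sub>v w = 0\<^sub>v m"
    then obtain w where w: "w \<in> carrier_vec m" "w \<noteq> 0\<^sub>v m" "to_mat m M *\<^sub>v w = 0\<^sub>v m"
      by blast
    then have w_eq: "w = vec m (\<lambda>i. w $ i)"
      by auto
    have "\<exists>i<m. w $ i \<noteq> 0"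
    proof (rule ccontr)
      assume "\<not> (\<exists>i<m. w $ i \<noteq> 0)"
      then have "w = 0\<^sub>v m"
        using w(1) by (intro eq_vecI) auto
      then show False
        using w(2) by simp
    qed
    moreover have "(\<Sum>j<m. M i j * w $ j) = 0" if "i < m" for i
      using arg_cong[OF w(3), of "\<lambda>x. x $ i"] that mult[of i "\<lambda>i. w $ i"] w_eq by simp
    ultimately show "\<exists>v. (\<exists>i<m. v i \<noteq> 0) \<and> (\<forall>i<m. (\<Sum>j<m. M i j * v j) = 0)"
      by blast
  next
    assume "\<exists>v. (\<exists>i<m. v i \<noteq> 0) \<and> (\<forall>i<m. (\<Sum>j<m. M i j * v j) = 0)"
    then obtain v i where i: "i < m" "v i \<noteq> 0" and ker: "\<forall>i<m. (\<Sum>j<m. M i j * v j) = 0"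
      by blast
    have "vec m v \<noteq> 0\<^sub>v m"
      using i by (metis index_vec index_zero_vec(1))
    moreover have "to_mat m M *\<^sub>v vec m v = 0\<^sub>v m"
      using ker mult by (intro eq_vecI) (auto simp: to_mat_def)
    ultimately show "\<exists>w. w \<in> carrier_vec m \<and> w \<noteq> 0\<^sub>v m \<and> to_mat m M *\<^sub>v w = 0\<^sub>v m"
      by (intro exI[of _ "vec m v"]) auto
  qed
  then show ?thesis
    unfolding det_0_iff_vec_prod_zero[OF to_mat_carrier] .
qed

lemma pd_det_nonzero:
  assumes "pd_mat m M"
  shows "det (to_mat m M) \<noteq> 0"
proof
  assume "det (to_mat m M) = 0"
  then obtain v where v: "\<exists>i<m. v i \<noteq> 0" and ker: "\<forall>i<m. (\<Sum>j<m. M i j * v j) = 0"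
    unfolding det_zero_iff_kernel by blast
  have "quad_form m M v = (\<Sum>i<m. v i * (\<Sum>j<m. M i j * v j))"
    by (simp add: sum_distrib_left mult.assoc)
  then have "quad_form m M v = 0"
    using ker by simp
  then show False
    using assms v unfolding pd_mat_def by fastforce
qed

lemma psd_not_pd_det_zero:
  assumes "sym_mat m M" and psd: "psd_mat m M" and "\<not> pd_mat m M"
  shows "det (to_mat m M) = 0"
proof -
  obtain v i where "i < m" "v i \<noteq> 0" and "\<not> quad_form m M v > 0"
    using assms(3) unfolding pd_mat_def by blast
  moreover have "quad_form m M v \<ge> 0"
    using psd unfolding psd_mat_def by blast
  ultimately have "quad_form m M v = 0"
    by linarith
  then show ?thesis
    unfolding det_zero_iff_kernel using psd_isotropic_kernel[OF assms(1) psd] \<open>i < m\<close> \<open>v i \<noteq> 0\<close>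
    by blast
qed

text \<open>The determinant of a matrix with polynomial entries is polynomial (Leibniz formula).\<close>
lemma det_polynomial:
  assumes "\<And>i j. i < m \<Longrightarrow> j < m \<Longrightarrow> real_polynomial_function (\<lambda>s. M s i j)"
  shows "real_polynomial_function (\<lambda>s. det (to_mat m (M s)))"
proof -
  have perm: "p i < m" if "p permutes {0..<m}" "i < m" for p i
    using that by (metis atLeastLessThan_iff permutes_in_image zero_le)
  have "det (to_mat m (M s)) = (\<Sum>p\<in>{p. p permutes {0..<m}}. signof p * (\<Prod>i=0..<m. M s i (p i)))" for s
    unfolding det_def'[of "to_mat m (M s)" m, OF to_mat_carrier]
    using perm by (intro sum.cong refl arg_cong2[where f = "(*)"] prod.cong) (auto simp: to_mat_def)
  moreover have "real_polynomial_function
      (\<lambda>s. \<Sum>p\<in>{p. p permutes {0..<m}}. signof p * (\<Prod>i=0..<m. M s i (p i)))"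
    using assms perm finite_permutations
    by (intro real_polynomial_function_sum real_polynomial_function.intros(2,4)
        real_polynomial_function_prod) auto
  ultimately show ?thesis
    by simp
qed

subsection \<open>Spectrahedra defined by linear matrix pencils\<close>

lemma sym_mat_pencil: "\<forall>\<alpha>\<in>multi_idx n d. sym_mat m (A \<alpha>) \<Longrightarrow> sym_mat m (pencil n d A f)"
  by (auto simp: sym_mat_def pencil_def intro!: sum.cong)

lemma quad_form_pencil:
  "quad_form m (pencil n d A f) v = (\<Sum>\<alpha>\<in>multi_idx n d. f \<alpha> * quad_form m (A \<alpha>) v)"
proof -
  have "quad_form m (pencil n d A f) v = (\<Sum>i<m. \<Sum>j<m. \<Sum>\<alpha>\<in>multi_idx n d. f \<alpha> * (v i * A \<alpha> i j * v j))"
    by (simp add: pencil_def sum_distrib_left sum_distrib_right algebra_simps)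
  also have "\<dots> = (\<Sum>i<m. \<Sum>\<alpha>\<in>multi_idx n d. \<Sum>j<m. f \<alpha> * (v i * A \<alpha> i j * v j))"
    by (intro sum.cong refl) (rule sum.swap)
  also have "\<dots> = (\<Sum>\<alpha>\<in>multi_idx n d. \<Sum>i<m. \<Sum>j<m. f \<alpha> * (v i * A \<alpha> i j * v j))"
    by (rule sum.swap)
  also have "\<dots> = (\<Sum>\<alpha>\<in>multi_idx n d. f \<alpha> * quad_form m (A \<alpha>) v)"
    by (simp add: sum_distrib_left)
  finally show ?thesis .
qed

text \<open>Positive definiteness is an open condition: a form at which a symmetric pencil is
  positive definite is an interior point of the spectrahedron \<open>{g. L(g) \<succeq> 0}\<close>.\<close>
lemma pd_pencil_interior:
  assumes sym: "\<forall>\<alpha>\<in>multi_idx n d. sym_mat m (A \<alpha>)" and f: "f \<in> forms n d"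
    and pd: "pd_mat m (pencil n d A f)"
  shows "f \<in> form_interior n d {g \<in> forms n d. psd_mat m (pencil n d A g)}"
proof -
  obtain c where c: "c > 0" "\<And>v. quad_form m (pencil n d A f) v \<ge> c * sq_norm m v"
    using pd_coercive[OF sym_mat_pencil[OF sym] pd] by blast
  define K where "K = (\<Sum>\<alpha>\<in>multi_idx n d. \<Sum>i<m. \<Sum>j<m. \<bar>A \<alpha> i j\<bar>)"
  have K: "K \<ge> 0"
    unfolding K_def by (intro sum_nonneg) auto
  define e where "e = c / (K + 1)"
  have e: "e > 0" "e * K \<le> c"
    using c(1) K by (auto simp: e_def field_simps)
  have "psd_mat m (pencil n d A g)" if dist: "coeff_dist n d f g < e" for g
    unfolding psd_mat_def
  proof
    fix v :: "nat \<Rightarrow> real"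
    let ?q = "\<lambda>\<alpha>. quad_form m (A \<alpha>) v"
    let ?\<delta> = "\<Sum>\<alpha>\<in>multi_idx n d. (g \<alpha> - f \<alpha>) * ?q \<alpha>"
    have V: "sq_norm m v \<ge> 0"
      by (simp add: sum_nonneg)
    have split: "quad_form m (pencil n d A g) v = quad_form m (pencil n d A f) v + ?\<delta>"
      unfolding quad_form_pencil by (simp add: sum.distrib[symmetric] algebra_simps)
    have "\<bar>?\<delta>\<bar> \<le> (\<Sum>\<alpha>\<in>multi_idx n d. \<bar>g \<alpha> - f \<alpha>\<bar> * \<bar>?q \<alpha>\<bar>)"
      unfolding abs_mult[symmetric] by (rule sum_abs)
    also have "\<dots> \<le> (\<Sum>\<alpha>\<in>multi_idx n d. e * ((\<Sum>i<m. \<Sum>j<m. \<bar>A \<alpha> i j\<bar>) * sq_norm m v))"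
    proof (rule sum_mono)
      fix \<alpha> assume \<alpha>: "\<alpha> \<in> multi_idx n d"
      have "\<bar>g \<alpha> - f \<alpha>\<bar> \<le> e"
        using coeff_le_coeff_dist[OF \<alpha>, of g f] dist by linarith
      then show "\<bar>g \<alpha> - f \<alpha>\<bar> * \<bar>?q \<alpha>\<bar> \<le> e * ((\<Sum>i<m. \<Sum>j<m. \<bar>A \<alpha> i j\<bar>) * sq_norm m v)"
        using quad_form_bound[where m = m and H = "A \<alpha>" and v = v] e(1)
        by (intro mult_mono) auto
    qed
    also have "\<dots> = e * (K * sq_norm m v)"
      unfolding K_def by (simp only: sum_distrib_left[symmetric] sum_distrib_right[symmetric])
    also have "\<dots> \<le> c * sq_norm m v"
      using mult_right_mono[OF e(2) V] by (simp add: mult.assoc)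
    finally show "quad_form m (pencil n d A g) v \<ge> 0"
      using split c(2)[of v] by linarith
  qed
  then show ?thesis
    unfolding form_interior_def using f e(1) by blast
qed

text \<open>By the identity principle
  every polynomial quantity vanishing on the boundary must then vanish at an interior point.\<close>
definition boundary_path :: "nat \<Rightarrow> nat \<Rightarrow> (real \<Rightarrow> (nat \<Rightarrow> nat) \<Rightarrow> real) \<Rightarrow> bool" where
  "boundary_path n d F \<longleftrightarrow>
     (\<forall>s. F s \<in> forms n d) \<and> (\<forall>\<alpha>. real_polynomial_function (\<lambda>s. F s \<alpha>)) \<and>
     (\<forall>s>0. F s \<in> Pnd n d \<and> F s \<in> form_boundary n d (Pnd n d)) \<and>
     F (-1) \<in> form_interior n d (Pnd n d)"

lemma boundary_path_test_form:
  "n \<ge> 2 \<Longrightarrow> even d \<Longrightarrow> d > 2 \<Longrightarrow> boundary_path n d (test_form n d)"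
  unfolding boundary_path_def
  by (simp add: test_form_forms test_form_polynomial test_form_nonneg test_form_boundary test_form_interior)

lemma coeff_polynomial_along_path:
  assumes \<phi>: "coeff_polynomial n d \<phi>" and F: "\<And>s. F s \<in> forms n d"
    and poly_F: "\<And>\<alpha>. real_polynomial_function (\<lambda>s. F s \<alpha>)"
  shows "real_polynomial_function (\<lambda>s. \<phi> (F s))"
proof -
  obtain E c where E: "finite E"
    and rep: "\<forall>f\<in>forms n d. \<phi> f = (\<Sum>\<beta>\<in>E. c \<beta> * (\<Prod>\<alpha>\<in>multi_idx n d. f \<alpha> ^ \<beta> \<alpha>))"
    using \<phi> unfolding coeff_polynomial_def by blast
  have "real_polynomial_function (\<lambda>s. \<Sum>\<beta>\<in>E. c \<beta> * (\<Prod>\<alpha>\<in>multi_idx n d. F s \<alpha> ^ \<beta> \<alpha>))"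
    using E finite_multi_idx poly_F
    by (intro real_polynomial_function_sum real_polynomial_function.intros(2,4)
        real_polynomial_function_prod real_polynomial_function_power) auto
  then show ?thesis
    using rep F by simp
qed

lemma no_polynomial_boundary_equation:
  assumes "boundary_path n d F"
  shows "\<not> (\<exists>\<phi>. coeff_polynomial n d \<phi> \<and>
              (\<forall>f\<in>form_interior n d (Pnd n d). \<phi> f > 0) \<and>
              (\<forall>f\<in>form_boundary n d (Pnd n d). \<phi> f = 0))"
proof
  assume "\<exists>\<phi>. coeff_polynomial n d \<phi> \<and>
              (\<forall>f\<in>form_interior n d (Pnd n d). \<phi> f > 0) \<and>
              (\<forall>f\<in>form_boundary n d (Pnd n d). \<phi> f = 0)"
  then obtain \<phi> where \<phi>: "coeff_polynomial n d \<phi>"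
    and pos: "\<forall>f\<in>form_interior n d (Pnd n d). \<phi> f > 0"
    and zero: "\<forall>f\<in>form_boundary n d (Pnd n d). \<phi> f = 0"
    by blast
  have "real_polynomial_function (\<lambda>s. \<phi> (F s))"
    using assms by (intro coeff_polynomial_along_path[OF \<phi>]) (auto simp: boundary_path_def)
  moreover have "\<phi> (F s) = 0" if "s > 0" for s
    using assms zero that by (auto simp: boundary_path_def)
  ultimately have "\<phi> (F (-1)) = 0"
    by (rule real_polynomial_function_vanishing_on_positives)
  moreover have "\<phi> (F (-1)) > 0"
    using assms pos by (auto simp: boundary_path_def)
  ultimately show False
    by simp
qed

text \<open>No symmetric pencil cuts out the cone and is positive definite on its interior: along the
  path, \<open>det L(F s)\<close> is polynomial in \<open>s\<close>, vanishes for \<open>s > 0\<close> (psd but not pd on the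
  boundary), hence vanishes at the interior point \<open>F (-1)\<close>.\<close>
lemma no_spectrahedral_representation:
  assumes path: "boundary_path n d F"
  shows "\<not> (\<exists>(m::nat) (A :: (nat \<Rightarrow> nat) \<Rightarrow> nat \<Rightarrow> nat \<Rightarrow> real).
              (\<forall>\<alpha>\<in>multi_idx n d. sym_mat m (A \<alpha>)) \<and>
              Pnd n d = {f \<in> forms n d. psd_mat m (pencil n d A f)} \<and>
              (\<forall>f\<in>form_interior n d (Pnd n d). pd_mat m (pencil n d A f)))"
proof
  assume "\<exists>(m::nat) (A :: (nat \<Rightarrow> nat) \<Rightarrow> nat \<Rightarrow> nat \<Rightarrow> real).
              (\<forall>\<alpha>\<in>multi_idx n d. sym_mat m (A \<alpha>)) \<and>
              Pnd n d = {f \<in> forms n d. psd_mat m (pencil n d A f)} \<and>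
              (\<forall>f\<in>form_interior n d (Pnd n d). pd_mat m (pencil n d A f))"
  then obtain m and A :: "(nat \<Rightarrow> nat) \<Rightarrow> nat \<Rightarrow> nat \<Rightarrow> real"
    where sym: "\<forall>\<alpha>\<in>multi_idx n d. sym_mat m (A \<alpha>)"
      and cone: "Pnd n d = {f \<in> forms n d. psd_mat m (pencil n d A f)}"
      and pd_interior: "\<forall>f\<in>form_interior n d (Pnd n d). pd_mat m (pencil n d A f)"
    by blast
  have F: "\<And>s. F s \<in> forms n d" and poly_F: "\<And>\<alpha>. real_polynomial_function (\<lambda>s. F s \<alpha>)"
    using path by (auto simp: boundary_path_def)
  have "real_polynomial_function (\<lambda>s. det (to_mat m (pencil n d A (F s))))"
    unfolding pencil_def using finite_multi_idx poly_F
    by (intro det_polynomial real_polynomial_function_sum real_polynomial_function.intros(2,4)) auto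
  moreover have "det (to_mat m (pencil n d A (F s))) = 0" if s: "s > 0" for s
  proof (rule psd_not_pd_det_zero[OF sym_mat_pencil[OF sym]])
    show "psd_mat m (pencil n d A (F s))"
      using path s cone by (auto simp: boundary_path_def)
    have "F s \<notin> form_interior n d (Pnd n d)"
      using path s boundary_not_interior by (auto simp: boundary_path_def)
    then show "\<not> pd_mat m (pencil n d A (F s))"
      using pd_pencil_interior[OF sym F] cone by auto
  qed
  ultimately have "det (to_mat m (pencil n d A (F (-1)))) = 0"
    by (rule real_polynomial_function_vanishing_on_positives)
  moreover have "pd_mat m (pencil n d A (F (-1)))"
    using path pd_interior by (auto simp: boundary_path_def)
  ultimately show False
    using pd_det_nonzero by blast
qed

theorem mainTheorem6:
  fixes n d :: nat
  assumes "even d" and "d > 2" and "n \<ge> 2"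
  shows "\<not> (\<exists>\<phi>. coeff_polynomial n d \<phi> \<and>
              (\<forall>f\<in>form_interior n d (Pnd n d). \<phi> f > 0) \<and>
              (\<forall>f\<in>form_boundary n d (Pnd n d). \<phi> f = 0))
         \<and> \<not> (\<exists>(m::nat) (A :: (nat \<Rightarrow> nat) \<Rightarrow> nat \<Rightarrow> nat \<Rightarrow> real).
              (\<forall>\<alpha>\<in>multi_idx n d. sym_mat m (A \<alpha>)) \<and>
              Pnd n d = {f \<in> forms n d. psd_mat m (pencil n d A f)} \<and>
              (\<forall>f\<in>form_interior n d (Pnd n d). pd_mat m (pencil n d A f)))"
proof -
  have "boundary_path n d (test_form n d)"
    using assms by (intro boundary_path_test_form)
  then show ?thesis
    by (intro conjI no_polynomial_boundary_equation no_spectrahedral_representation)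
qed

end
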